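(* Let $B=(B,+,0)$ be a unitary magma and $(X,\varphi)$ a $B$-action. Then $(X,\varphi(-,0,-,0),0)$, i.e. $X$ with operation $x+x'=\varphi(x,0,x',0)$ and neutral element $0$, is a unitary magma, and $$X\xrightarrow{\langle 1,0\rangle} X\rtimes_\varphi B \underset{\langle 0,1\rangle}{\overset{\pi_B}{\rightleftarrows}} B$$ is a split extension of unitary magmas: the maps $\langle1,0\rangle(x)=(x,0)$, $\pi_B(x,b)=b$ and $\langle 0,1\rangle(b)=(0,b)$ are well-defined morphisms of unitary magmas, $\pi_B\langle0,1\rangle=1_B$, and $\langle 1,0\rangle$ is a kernel of $\pi_B$. Moreover, for $(x,b)\in X\times B$, one has $(x,b)\in X\rtimes_\varphi B$ if and only if $(x,b)=(x,0)+(0,b)$, where the sum is given by $(x,b)+(x',b')=(\varphi(x,b,x',b'),b+b')$.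
   Context: A unitary magma is a set with a binary operation $+$ and an element $0$ with $b+0=b=0+b$ for all $b$; morphisms preserve $+$ and $0$. A $B$-action is a pair $(X,\varphi)$ with $X$ a set and $\varphi\colon X\times B\times X\times B\to X$ a map such that: (1) there is an element $0\in X$ with $\varphi(x,0,0,0)=x=\varphi(0,0,x,0)$ for all $x\in X$; (2) $\varphi(x,b,0,0)=\varphi(x,0,0,b)=\varphi(0,0,x,b)$ for all $x\in X,b\in B$; (3) $\varphi(0,b,0,b')=0$ for all $b,b'\in B$; (4) writing $\varphi_{00}(x,b)=\varphi(x,0,0,b)$, for all $x,x'\in X$, $b,b'\in B$: $\varphi(x,b,x',b')=\varphi_{00}\big(\varphi(\varphi_{00}(x,b),b,\varphi_{00}(x',b'),b'),\,b+b'\big)$. The semidirect product $X\rtimes_\varphi B$ is the set $\{(x,b)\in X\times B\mid\varphi(x,0,0,b)=x\}$ with operation $(x,b)+(x',b')=(\varphi(x,b,x',b'),b+b')$ and neutral element $(0,0)$ (it is a unitary magma). *)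

theory Defs
  imports Main
begin

definition unitary_magma :: "'a set \<Rightarrow> ('a \<Rightarrow> 'a \<Rightarrow> 'a) \<Rightarrow> 'a \<Rightarrow> bool" where
  "unitary_magma M f z \<longleftrightarrow> z \<in> M \<and> (\<forall>a\<in>M. \<forall>b\<in>M. f a b \<in> M)
     \<and> (\<forall>b\<in>M. f b z = b \<and> f z b = b)"

definition magma_hom :: "'a set \<Rightarrow> ('a \<Rightarrow> 'a \<Rightarrow> 'a) \<Rightarrow> 'a \<Rightarrow>
    'b set \<Rightarrow> ('b \<Rightarrow> 'b \<Rightarrow> 'b) \<Rightarrow> 'b \<Rightarrow> ('a \<Rightarrow> 'b) \<Rightarrow> bool" where
  "magma_hom M f z N g w h \<longleftrightarrow> (\<forall>a\<in>M. h a \<in> N)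
     \<and> (\<forall>a\<in>M. \<forall>b\<in>M. h (f a b) = g (h a) (h b)) \<and> h z = w"

definition b_action :: "'b set \<Rightarrow> ('b \<Rightarrow> 'b \<Rightarrow> 'b) \<Rightarrow> 'b \<Rightarrow>
    'x set \<Rightarrow> ('x \<Rightarrow> 'b \<Rightarrow> 'x \<Rightarrow> 'b \<Rightarrow> 'x) \<Rightarrow> 'x \<Rightarrow> bool" where
  "b_action B add zB X phi zX \<longleftrightarrow>
     (\<forall>x\<in>X. \<forall>b\<in>B. \<forall>x'\<in>X. \<forall>b'\<in>B. phi x b x' b' \<in> X)
   \<and> zX \<in> X
   \<and> (\<forall>x\<in>X. phi x zB zX zB = x \<and> phi zX zB x zB = x)
   \<and> (\<forall>x\<in>X. \<forall>b\<in>B. phi x b zX zB = phi x zB zX b \<and> phi x zB zX b = phi zX zB x b)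
   \<and> (\<forall>b\<in>B. \<forall>b'\<in>B. phi zX b zX b' = zX)
   \<and> (\<forall>x\<in>X. \<forall>x'\<in>X. \<forall>b\<in>B. \<forall>b'\<in>B.
        phi x b x' b' = phi (phi (phi x zB zX b) b (phi x' zB zX b') b') zB zX (add b b'))"

text \<open>Semidirect product: carrier and operation (the operation is defined on all of X \<times> B).\<close>
definition sdp_carrier :: "'b set \<Rightarrow> 'b \<Rightarrow> 'x set \<Rightarrow> ('x \<Rightarrow> 'b \<Rightarrow> 'x \<Rightarrow> 'b \<Rightarrow> 'x) \<Rightarrow> 'x
    \<Rightarrow> ('x \<times> 'b) set" where
  "sdp_carrier B zB X phi zX = {(x, b) \<in> X \<times> B. phi x zB zX b = x}"

definition sdp_op :: "('b \<Rightarrow> 'b \<Rightarrow> 'b) \<Rightarrow> ('x \<Rightarrow> 'b \<Rightarrow> 'x \<Rightarrow> 'b \<Rightarrow> 'x)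
    \<Rightarrow> ('x \<times> 'b) \<Rightarrow> ('x \<times> 'b) \<Rightarrow> ('x \<times> 'b)" where
  "sdp_op add phi p q = (phi (fst p) (snd p) (fst q) (snd q), add (snd p) (snd q))"

text \<open>The universal property quantifies over test objects C whose elements live in the type 'c;
  since 'c is a free type variable of the theorem, this covers arbitrary unitary magmas.\<close>
definition is_kernel :: "'c itself \<Rightarrow> 'k set \<Rightarrow> ('k \<Rightarrow> 'k \<Rightarrow> 'k) \<Rightarrow> 'k \<Rightarrow>
    'a set \<Rightarrow> ('a \<Rightarrow> 'a \<Rightarrow> 'a) \<Rightarrow> 'a \<Rightarrow> 'p set \<Rightarrow> ('p \<Rightarrow> 'p \<Rightarrow> 'p) \<Rightarrow> 'p \<Rightarrow>
    ('k \<Rightarrow> 'a) \<Rightarrow> ('a \<Rightarrow> 'p) \<Rightarrow> bool" where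
  "is_kernel (_ :: 'c itself) K fK zK A fA zA P fP zP k p \<longleftrightarrow>
     magma_hom K fK zK A fA zA k \<and> magma_hom A fA zA P fP zP p
   \<and> (\<forall>y\<in>K. p (k y) = zP)
   \<and> (\<forall>(C :: 'c set) fC zC h. unitary_magma C fC zC \<and> magma_hom C fC zC A fA zA h
        \<and> (\<forall>c\<in>C. p (h c) = zP) \<longrightarrow>
        (\<exists>g. magma_hom C fC zC K fK zK g \<and> (\<forall>c\<in>C. k (g c) = h c)
           \<and> (\<forall>g'. magma_hom C fC zC K fK zK g' \<and> (\<forall>c\<in>C. k (g' c) = h c)
                   \<longrightarrow> (\<forall>c\<in>C. g' c = g c))))"

end

theory Submission
  imports Defs
begin

text \<open>Axiom (4) says that \<open>\<phi>(x,b,x',b')\<close> is a fixed point of \<open>\<phi>\<^sub>0\<^sub>0(-,b+b')\<close> as soon as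
  \<open>x\<close> and \<open>x'\<close> are fixed points of \<open>\<phi>\<^sub>0\<^sub>0(-,b)\<close> and \<open>\<phi>\<^sub>0\<^sub>0(-,b')\<close>; this is exactly closure of
  \<open>X \<rtimes>\<^sub>\<phi> B\<close> under its operation. Axioms (2) and (3) give the unit laws and make \<open>\<langle>0,1\<rangle>\<close>
  well defined. The map \<open>\<langle>1,0\<rangle>\<close> is an injective morphism whose image is the whole fibre of
  \<open>\<pi>\<^sub>B\<close> over \<open>0\<close>, and such a morphism is always a kernel.\<close>

lemma unitary_magmaD:
  assumes "unitary_magma M f z"
  shows unitary_magma_zero_mem: "z \<in> M"
    and unitary_magma_closed: "\<And>a b. a \<in> M \<Longrightarrow> b \<in> M \<Longrightarrow> f a b \<in> M"
    and unitary_magma_right_unit: "\<And>b. b \<in> M \<Longrightarrow> f b z = b"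
    and unitary_magma_left_unit: "\<And>b. b \<in> M \<Longrightarrow> f z b = b"
  using assms unfolding unitary_magma_def by auto

lemma b_actionD:
  assumes "b_action B add zB X phi zX"
  shows b_action_closed:
      "\<And>x b x' b'. x \<in> X \<Longrightarrow> b \<in> B \<Longrightarrow> x' \<in> X \<Longrightarrow> b' \<in> B \<Longrightarrow> phi x b x' b' \<in> X"
    and b_action_zero_mem: "zX \<in> X"
    and b_action_right_unit: "\<And>x. x \<in> X \<Longrightarrow> phi x zB zX zB = x"
    and b_action_left_unit: "\<And>x. x \<in> X \<Longrightarrow> phi zX zB x zB = x"
    and b_action_shift_left: "\<And>x b. x \<in> X \<Longrightarrow> b \<in> B \<Longrightarrow> phi x b zX zB = phi x zB zX b"
    and b_action_shift_right: "\<And>x b. x \<in> X \<Longrightarrow> b \<in> B \<Longrightarrow> phi x zB zX b = phi zX zB x b"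
    and b_action_zero: "\<And>b b'. b \<in> B \<Longrightarrow> b' \<in> B \<Longrightarrow> phi zX b zX b' = zX"
    and b_action_normalise: "\<And>x x' b b'. x \<in> X \<Longrightarrow> x' \<in> X \<Longrightarrow> b \<in> B \<Longrightarrow> b' \<in> B \<Longrightarrow>
        phi x b x' b' = phi (phi (phi x zB zX b) b (phi x' zB zX b') b') zB zX (add b b')"
  using assms unfolding b_action_def by blast+

lemma magma_hom_lift_inj_on:
  assumes C: "unitary_magma C fC zC" and K: "unitary_magma K fK zK"
    and k: "magma_hom K fK zK A fA zA k" and inj: "inj_on k K"
    and h: "magma_hom C fC zC A fA zA h"
    and g: "\<forall>c\<in>C. g c \<in> K" and kg: "\<forall>c\<in>C. k (g c) = h c"
  shows "magma_hom C fC zC K fK zK g"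
  unfolding magma_hom_def
proof (intro conjI ballI)
  show "g c \<in> K" if "c \<in> C" for c
    using g that by blast
next
  fix c c' assume c: "c \<in> C" and c': "c' \<in> C"
  have "k (g (fC c c')) = h (fC c c')"
    using kg c c' unitary_magma_closed[OF C] by blast
  also have "\<dots> = fA (k (g c)) (k (g c'))"
    using h kg c c' unfolding magma_hom_def by simp
  also have "\<dots> = k (fK (g c) (g c'))"
    using k g c c' unfolding magma_hom_def by simp
  finally show "g (fC c c') = fK (g c) (g c')"
    by (rule inj_onD[OF inj]) (use g c c' unitary_magma_closed[OF C] unitary_magma_closed[OF K] in auto)
next
  have "k (g zC) = h zC"
    using kg unitary_magma_zero_mem[OF C] by blast
  also have "\<dots> = k zK"
    using h k unfolding magma_hom_def by simp
  finally show "g zC = zK"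
    by (rule inj_onD[OF inj]) (use g unitary_magma_zero_mem[OF C] unitary_magma_zero_mem[OF K] in auto)
qed

lemma is_kernelI:
  assumes K: "unitary_magma K fK zK"
    and k: "magma_hom K fK zK A fA zA k" and p: "magma_hom A fA zA P fP zP p"
    and pk: "\<forall>y\<in>K. p (k y) = zP" and inj: "inj_on k K"
    and fibre: "\<And>a. a \<in> A \<Longrightarrow> p a = zP \<Longrightarrow> a \<in> k ` K"
  shows "is_kernel TYPE('c) K fK zK A fA zA P fP zP k p"
  unfolding is_kernel_def
proof (intro conjI k p pk allI impI)
  fix C :: "'c set" and fC zC h
  assume "unitary_magma C fC zC \<and> magma_hom C fC zC A fA zA h \<and> (\<forall>c\<in>C. p (h c) = zP)"
  then have C: "unitary_magma C fC zC" and h: "magma_hom C fC zC A fA zA h"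
    and ph: "\<forall>c\<in>C. p (h c) = zP"
    by auto
  have hK: "h c \<in> k ` K" if "c \<in> C" for c
    using fibre h ph that unfolding magma_hom_def by blast
  define g where "g c = the_inv_into K k (h c)" for c
  have g: "\<forall>c\<in>C. g c \<in> K" and kg: "\<forall>c\<in>C. k (g c) = h c"
    using hK the_inv_into_into[OF inj] f_the_inv_into_f[OF inj] unfolding g_def by auto
  have unique: "g' c = g c"
    if "magma_hom C fC zC K fK zK g'" "\<forall>c\<in>C. k (g' c) = h c" "c \<in> C" for g' c
    by (rule inj_onD[OF inj]) (use that g kg in \<open>auto simp: magma_hom_def\<close>)
  show "\<exists>g. magma_hom C fC zC K fK zK g \<and> (\<forall>c\<in>C. k (g c) = h c)
      \<and> (\<forall>g'. magma_hom C fC zC K fK zK g' \<and> (\<forall>c\<in>C. k (g' c) = h c) \<longrightarrow> (\<forall>c\<in>C. g' c = g c))"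
    using magma_hom_lift_inj_on[OF C K k inj h g kg] kg unique by blast
qed

lemma mem_sdp_carrier_iff:
  "(x, b) \<in> sdp_carrier B zB X phi zX \<longleftrightarrow> x \<in> X \<and> b \<in> B \<and> phi x zB zX b = x"
  by (simp add: sdp_carrier_def)

lemma unitary_magma_b_action:
  assumes "b_action B add zB X phi zX" and "zB \<in> B"
  shows "unitary_magma X (\<lambda>x x'. phi x zB x' zB) zX"
  using assms b_action_closed[OF assms(1)] b_action_zero_mem[OF assms(1)]
    b_action_right_unit[OF assms(1)] b_action_left_unit[OF assms(1)]
  unfolding unitary_magma_def by auto

lemma sdp_op_closed:
  assumes B: "unitary_magma B add zB" and act: "b_action B add zB X phi zX"
    and "p \<in> sdp_carrier B zB X phi zX" and "q \<in> sdp_carrier B zB X phi zX"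
  shows "sdp_op add phi p q \<in> sdp_carrier B zB X phi zX"
proof -
  obtain x b x' b' where p: "p = (x, b)" and q: "q = (x', b')"
    and x: "x \<in> X" "b \<in> B" "phi x zB zX b = x" and x': "x' \<in> X" "b' \<in> B" "phi x' zB zX b' = x'"
    using assms(3,4) by (cases p, cases q) (auto simp: mem_sdp_carrier_iff)
  have "phi (phi x b x' b') zB zX (add b b') = phi x b x' b'"
    using b_action_normalise[OF act x(1) x'(1) x(2) x'(2)] x(3) x'(3) by simp
  then show ?thesis
    using p q x x' b_action_closed[OF act] unitary_magma_closed[OF B]
    by (simp add: sdp_op_def mem_sdp_carrier_iff)
qed

lemma unitary_magma_sdp:
  assumes B: "unitary_magma B add zB" and act: "b_action B add zB X phi zX"
  shows "unitary_magma (sdp_carrier B zB X phi zX) (sdp_op add phi) (zX, zB)"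
  unfolding unitary_magma_def
proof (intro conjI ballI)
  show "(zX, zB) \<in> sdp_carrier B zB X phi zX"
    using b_action_zero_mem[OF act] b_action_zero[OF act] unitary_magma_zero_mem[OF B]
    by (simp add: mem_sdp_carrier_iff)
next
  show "sdp_op add phi p q \<in> sdp_carrier B zB X phi zX"
    if "p \<in> sdp_carrier B zB X phi zX" "q \<in> sdp_carrier B zB X phi zX" for p q
    using sdp_op_closed[OF B act that] .
next
  fix p assume "p \<in> sdp_carrier B zB X phi zX"
  then obtain x b where p: "p = (x, b)" "x \<in> X" "b \<in> B" "phi x zB zX b = x"
    by (cases p) (auto simp: mem_sdp_carrier_iff)
  then show "sdp_op add phi p (zX, zB) = p" and "sdp_op add phi (zX, zB) p = p"
    using b_action_shift_left[OF act] b_action_shift_right[OF act]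
      unitary_magma_right_unit[OF B] unitary_magma_left_unit[OF B]
    by (simp_all add: sdp_op_def)
qed

lemma magma_hom_sdp_embed:
  assumes B: "unitary_magma B add zB" and act: "b_action B add zB X phi zX"
  shows "magma_hom X (\<lambda>x x'. phi x zB x' zB) zX
    (sdp_carrier B zB X phi zX) (sdp_op add phi) (zX, zB) (\<lambda>x. (x, zB))"
  using b_action_right_unit[OF act] unitary_magmaD[OF B]
  by (simp add: magma_hom_def mem_sdp_carrier_iff sdp_op_def)

lemma magma_hom_sdp_proj:
  "magma_hom (sdp_carrier B zB X phi zX) (sdp_op add phi) (zX, zB) B add zB snd"
  by (auto simp: magma_hom_def sdp_carrier_def sdp_op_def)

lemma magma_hom_sdp_section:
  assumes act: "b_action B add zB X phi zX" and "zB \<in> B"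
  shows "magma_hom B add zB (sdp_carrier B zB X phi zX) (sdp_op add phi) (zX, zB) (\<lambda>b. (zX, b))"
  using assms b_action_zero_mem[OF act] b_action_zero[OF act]
  by (simp add: magma_hom_def mem_sdp_carrier_iff sdp_op_def)

lemma is_kernel_sdp_embed:
  assumes B: "unitary_magma B add zB" and act: "b_action B add zB X phi zX"
  shows "is_kernel TYPE('c) X (\<lambda>x x'. phi x zB x' zB) zX
    (sdp_carrier B zB X phi zX) (sdp_op add phi) (zX, zB) B add zB (\<lambda>x. (x, zB)) snd"
proof (rule is_kernelI)
  show "unitary_magma X (\<lambda>x x'. phi x zB x' zB) zX"
    using unitary_magma_b_action[OF act unitary_magma_zero_mem[OF B]] .
  show "a \<in> (\<lambda>x. (x, zB)) ` X" if "a \<in> sdp_carrier B zB X phi zX" "snd a = zB" for a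
    using that by (cases a) (auto simp: mem_sdp_carrier_iff)
qed (auto intro: magma_hom_sdp_embed[OF B act] magma_hom_sdp_proj inj_onI)

lemma mem_sdp_carrier_iff_decomposition:
  assumes "unitary_magma B add zB" and "x \<in> X" and "b \<in> B"
  shows "(x, b) \<in> sdp_carrier B zB X phi zX \<longleftrightarrow> (x, b) = sdp_op add phi (x, zB) (zX, b)"
  using assms unitary_magma_left_unit[OF assms(1)]
  by (auto simp: mem_sdp_carrier_iff sdp_op_def)

theorem proposition4p1:
  fixes B :: "'b set" and add :: "'b \<Rightarrow> 'b \<Rightarrow> 'b" and zB :: 'b
    and X :: "'x set" and phi :: "'x \<Rightarrow> 'b \<Rightarrow> 'x \<Rightarrow> 'b \<Rightarrow> 'x" and zX :: 'x
  assumes "unitary_magma B add zB"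
    and "b_action B add zB X phi zX"
  shows "unitary_magma X (\<lambda>x x'. phi x zB x' zB) zX
    \<and> unitary_magma (sdp_carrier B zB X phi zX) (sdp_op add phi) (zX, zB)
    \<and> magma_hom X (\<lambda>x x'. phi x zB x' zB) zX
        (sdp_carrier B zB X phi zX) (sdp_op add phi) (zX, zB) (\<lambda>x. (x, zB))
    \<and> magma_hom (sdp_carrier B zB X phi zX) (sdp_op add phi) (zX, zB) B add zB snd
    \<and> magma_hom B add zB (sdp_carrier B zB X phi zX) (sdp_op add phi) (zX, zB) (\<lambda>b. (zX, b))
    \<and> (\<forall>b\<in>B. snd (zX, b) = b)
    \<and> is_kernel TYPE('c) X (\<lambda>x x'. phi x zB x' zB) zX
        (sdp_carrier B zB X phi zX) (sdp_op add phi) (zX, zB) B add zB (\<lambda>x. (x, zB)) snd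
    \<and> (\<forall>x\<in>X. \<forall>b\<in>B. (x, b) \<in> sdp_carrier B zB X phi zX
          \<longleftrightarrow> (x, b) = sdp_op add phi (x, zB) (zX, b))"
proof (intro conjI ballI)
  note zB = unitary_magma_zero_mem[OF assms(1)]
  show "unitary_magma X (\<lambda>x x'. phi x zB x' zB) zX"
    by (rule unitary_magma_b_action[OF assms(2) zB])
  show "unitary_magma (sdp_carrier B zB X phi zX) (sdp_op add phi) (zX, zB)"
    by (rule unitary_magma_sdp[OF assms])
  show "magma_hom X (\<lambda>x x'. phi x zB x' zB) zX
      (sdp_carrier B zB X phi zX) (sdp_op add phi) (zX, zB) (\<lambda>x. (x, zB))"
    by (rule magma_hom_sdp_embed[OF assms])
  show "magma_hom (sdp_carrier B zB X phi zX) (sdp_op add phi) (zX, zB) B add zB snd"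
    by (rule magma_hom_sdp_proj)
  show "magma_hom B add zB (sdp_carrier B zB X phi zX) (sdp_op add phi) (zX, zB) (\<lambda>b. (zX, b))"
    by (rule magma_hom_sdp_section[OF assms(2) zB])
  show "snd (zX, b) = b" for b
    by simp
  show "is_kernel TYPE('c) X (\<lambda>x x'. phi x zB x' zB) zX
      (sdp_carrier B zB X phi zX) (sdp_op add phi) (zX, zB) B add zB (\<lambda>x. (x, zB)) snd"
    by (rule is_kernel_sdp_embed[OF assms])
  show "(x, b) \<in> sdp_carrier B zB X phi zX \<longleftrightarrow> (x, b) = sdp_op add phi (x, zB) (zX, b)"
    if "x \<in> X" "b \<in> B" for x b
    by (rule mem_sdp_carrier_iff_decomposition[OF assms(1) that])
qed

end
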